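(* In the example below, the strategy $\sigma$ is a symmetric Bayesian Nash equilibrium strategy that is weakly communication-proof but not strongly communication-proof (although it is not coordinated: after the message pair $(m_L,m_R)$ players miscoordinate with positive probability). Example: four types $L_1=(2,0,0,1)$, $L_2=(2,-15,0,1)$, $R_1=(1,0,0,2)$, $R_2=(1,0,-15,2)$ (written as $(u_{LL},u_{LR},u_{RL},u_{RR})$), with probabilities $P(L_1)=P(R_1)=1/18$, $P(L_2)=P(R_2)=8/18$, types drawn independently for the two players. Strategy $\sigma$: types $L_1,L_2$ send $m_L$ and types $R_1,R_2$ send $m_R$; after observing own message $m_L$ and opponent's $m_L$ all types play $L$; after own $m_R$ and opponent's $m_R$ all types play $R$; after own $m_L$ and opponent's $m_R$, type $L_1$ plays $L$ and type $L_2$ plays $R$; after own $m_R$ and opponent's $m_L$, type $R_1$ plays $R$ and type $R_2$ plays $L$.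
   Context: A type is a payoff vector $u=(u_{LL},u_{LR},u_{RL},u_{RR})$, where $u_{ab}$ is the payoff of a player of type $u$ who plays $a\in\{L,R\}$ while the opponent plays $b$. Two players' types are drawn independently from a given distribution. After learning types, players simultaneously send publicly observed costless messages from a finite set $M$ containing distinct messages $m_L,m_R$, then choose actions; a (symmetric) strategy specifies a distribution over messages for each type and a distribution over actions for each type and each observed pair (own message, opponent's message). Bayesian Nash equilibrium is defined as usual (no type can gain by deviating). Communication-proofness. Given a strategy profile of such a game with independent type distributions $(G,H)$ for players 1, 2, and a message pair $(m,m')$ sent with positive probability, the posteriors $G_m,H_{m'}$ are the conditional type distributions given the messages; the post-communication payoff of a type is its expected payoff from the action play prescribed after $(m,m')$, against the opponent's posterior. The renegotiation game after $(m,m')$ is the same game (one round of simultaneous communication with message set $M$, then actions) with player types drawn independently from $G_m$ and $H_{m'}$; its equilibria are possibly asymmetric Bayesian Nash equilibrium profiles. A profile $(\tau,\tau')$ CP trumps a profile $(\sigma,\sigma')$ with respect to $(G,H)$ and $(m,m')$ if it is an equilibrium of the renegotiation game and gives every type in the support of $G_m$ (player 1) and of $H_{m'}$ (player 2) an expected payoff at least its post-communication payoff, strictly for at least one such type. A symmetric equilibrium strategy $\sigma$ (with prior $F$ for both players) is strongly communication-proof if no profile CP trumps $(\sigma,\sigma)$ with respect to $(F,F)$ and any message pair; it is weakly communication-proof if for every $(\tau,\tau')$ that CP trumps $(\sigma,\sigma)$ with respect to $(F,F)$ and $(m,m')$, some profile CP trumps $(\tau,\tau')$ with respect to $(F_m,F_{m'})$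 and some message pair. *)

theory Defs
  imports Complex_Main
begin

text \<open>A payoff vector (u_LL, u_LR, u_RL, u_RR): u_ab is the payoff of a player
who plays a while the opponent plays b.\<close>

type_synonym payoff = "real \<times> real \<times> real \<times> real"

definition exp_pay :: "payoff \<Rightarrow> real \<Rightarrow> real \<Rightarrow> real" where
  "exp_pay v p q = (case v of (uLL, uLR, uRL, uRR) \<Rightarrow>
      p * q * uLL + p * (1 - q) * uLR + (1 - p) * q * uRL + (1 - p) * (1 - q) * uRR)"

definition is_dist :: "('x::finite \<Rightarrow> real) \<Rightarrow> bool" where
  "is_dist D \<longleftrightarrow> (\<forall>x. 0 \<le> D x) \<and> sum D UNIV = 1"

text \<open>A strategy: a distribution over messages for each type, and for each
type and observed pair (own message, opponent's message) the probability of
playing L (a distribution over the two actions L, R).\<close>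
type_synonym ('a, 'm) strategy = "('a \<Rightarrow> 'm \<Rightarrow> real) \<times> ('a \<Rightarrow> 'm \<Rightarrow> 'm \<Rightarrow> real)"

definition valid_strategy :: "('a::finite, 'm::finite) strategy \<Rightarrow> bool" where
  "valid_strategy s \<longleftrightarrow> (\<forall>t. is_dist (fst s t)) \<and>
     (\<forall>t m m'. 0 \<le> snd s t m m' \<and> snd s t m m' \<le> 1)"

definition type_payoff ::
  "('a \<Rightarrow> payoff) \<Rightarrow> 'a \<Rightarrow> ('m \<Rightarrow> real) \<Rightarrow> ('m \<Rightarrow> 'm \<Rightarrow> real) \<Rightarrow>
   ('a::finite \<Rightarrow> real) \<Rightarrow> ('a, 'm::finite) strategy \<Rightarrow> real" where
  "type_payoff u t \<mu> a H s' =
     (\<Sum>m\<in>UNIV. \<Sum>t'\<in>UNIV. \<Sum>m'\<in>UNIV.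
        \<mu> m * H t' * fst s' t' m' * exp_pay (u t) (a m m') (snd s' t' m' m))"

definition eq_pay ::
  "('a \<Rightarrow> payoff) \<Rightarrow> 'a \<Rightarrow> ('a::finite, 'm::finite) strategy \<Rightarrow> ('a \<Rightarrow> real) \<Rightarrow>
   ('a, 'm) strategy \<Rightarrow> real" where
  "eq_pay u t s H s' = type_payoff u t (fst s t) (snd s t) H s'"

definition is_eq ::
  "('a \<Rightarrow> payoff) \<Rightarrow> ('a::finite \<Rightarrow> real) \<Rightarrow> ('a \<Rightarrow> real) \<Rightarrow>
   ('a, 'm::finite) strategy \<Rightarrow> ('a, 'm) strategy \<Rightarrow> bool" where
  "is_eq u G H s1 s2 \<longleftrightarrow> valid_strategy s1 \<and> valid_strategy s2 \<and>
     (\<forall>t. G t > 0 \<longrightarrow> (\<forall>\<mu> a. is_dist \<mu> \<and> (\<forall>m m'. 0 \<le> a m m' \<and> a m m' \<le> 1) \<longrightarrow>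
         type_payoff u t \<mu> a H s2 \<le> eq_pay u t s1 H s2)) \<and>
     (\<forall>t. H t > 0 \<longrightarrow> (\<forall>\<mu> a. is_dist \<mu> \<and> (\<forall>m m'. 0 \<le> a m m' \<and> a m m' \<le> 1) \<longrightarrow>
         type_payoff u t \<mu> a G s1 \<le> eq_pay u t s2 G s1))"

definition msg_prob :: "('a::finite \<Rightarrow> real) \<Rightarrow> ('a, 'm) strategy \<Rightarrow> 'm \<Rightarrow> real" where
  "msg_prob G s m = (\<Sum>t\<in>UNIV. G t * fst s t m)"

definition post :: "('a::finite \<Rightarrow> real) \<Rightarrow> ('a, 'm) strategy \<Rightarrow> 'm \<Rightarrow> 'a \<Rightarrow> real" where
  "post G s m t = G t * fst s t m / msg_prob G s m"

definition pc_pay ::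
  "('a \<Rightarrow> payoff) \<Rightarrow> ('a::finite, 'm) strategy \<Rightarrow> ('a, 'm) strategy \<Rightarrow> ('a \<Rightarrow> real) \<Rightarrow>
   'm \<Rightarrow> 'm \<Rightarrow> 'a \<Rightarrow> real" where
  "pc_pay u s s' H m m' t =
     (\<Sum>t'\<in>UNIV. post H s' m' t' * exp_pay (u t) (snd s t m m') (snd s' t' m' m))"

definition CP_trumps ::
  "('a \<Rightarrow> payoff) \<Rightarrow> ('a::finite, 'm::finite) strategy \<Rightarrow> ('a, 'm) strategy \<Rightarrow>
   ('a, 'm) strategy \<Rightarrow> ('a, 'm) strategy \<Rightarrow> ('a \<Rightarrow> real) \<Rightarrow> ('a \<Rightarrow> real) \<Rightarrow>
   'm \<Rightarrow> 'm \<Rightarrow> bool" where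
  "CP_trumps u tau1 tau2 sig1 sig2 G H m m' \<longleftrightarrow>
     msg_prob G sig1 m > 0 \<and> msg_prob H sig2 m' > 0 \<and>
     is_eq u (post G sig1 m) (post H sig2 m') tau1 tau2 \<and>
     (\<forall>t. post G sig1 m t > 0 \<longrightarrow>
        pc_pay u sig1 sig2 H m m' t \<le> eq_pay u t tau1 (post H sig2 m') tau2) \<and>
     (\<forall>t. post H sig2 m' t > 0 \<longrightarrow>
        pc_pay u sig2 sig1 G m' m t \<le> eq_pay u t tau2 (post G sig1 m) tau1) \<and>
     ((\<exists>t. post G sig1 m t > 0 \<and>
        pc_pay u sig1 sig2 H m m' t < eq_pay u t tau1 (post H sig2 m') tau2) \<or>
      (\<exists>t. post H sig2 m' t > 0 \<and>
        pc_pay u sig2 sig1 G m' m t < eq_pay u t tau2 (post G sig1 m) tau1))"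

definition strongly_CP :: "('a \<Rightarrow> payoff) \<Rightarrow> ('a::finite \<Rightarrow> real) \<Rightarrow> ('a, 'm::finite) strategy \<Rightarrow> bool" where
  "strongly_CP u F sig \<longleftrightarrow> is_eq u F F sig sig \<and>
     \<not> (\<exists>tau1 tau2 m m'. CP_trumps u tau1 tau2 sig sig F F m m')"

definition weakly_CP :: "('a \<Rightarrow> payoff) \<Rightarrow> ('a::finite \<Rightarrow> real) \<Rightarrow> ('a, 'm::finite) strategy \<Rightarrow> bool" where
  "weakly_CP u F sig \<longleftrightarrow> is_eq u F F sig sig \<and>
     (\<forall>tau1 tau2 m m'. CP_trumps u tau1 tau2 sig sig F F m m' \<longrightarrow>
        (\<exists>rho1 rho2 n n'. CP_trumps u rho1 rho2 tau1 tau2 (post F sig m) (post F sig m') n n'))"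

definition miscoord_prob ::
  "('a::finite \<Rightarrow> real) \<Rightarrow> ('a \<Rightarrow> real) \<Rightarrow> ('a, 'm) strategy \<Rightarrow> ('a, 'm) strategy \<Rightarrow>
   'm \<Rightarrow> 'm \<Rightarrow> real" where
  "miscoord_prob G H s1 s2 m m' =
     (\<Sum>t\<in>UNIV. \<Sum>t'\<in>UNIV. post G s1 m t * post H s2 m' t' *
        (snd s1 t m m' * (1 - snd s2 t' m' m) + (1 - snd s1 t m m') * snd s2 t' m' m))"

datatype ex_type = L1 | L2 | R1 | R2

datatype ex_msg = mL | mR

instance ex_type :: finite
proof
  have "(UNIV :: ex_type set) = {L1, L2, R1, R2}" using ex_type.exhaust by auto
  then show "finite (UNIV :: ex_type set)" by (metis finite.emptyI finite_insert)
qed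

instance ex_msg :: finite
proof
  have "(UNIV :: ex_msg set) = {mL, mR}" using ex_msg.exhaust by auto
  then show "finite (UNIV :: ex_msg set)" by (metis finite.emptyI finite_insert)
qed

fun u_ex :: "ex_type \<Rightarrow> payoff" where
  "u_ex L1 = (2, 0, 0, 1)"
| "u_ex L2 = (2, -15, 0, 1)"
| "u_ex R1 = (1, 0, 0, 2)"
| "u_ex R2 = (1, 0, -15, 2)"

fun F_ex :: "ex_type \<Rightarrow> real" where
  "F_ex L1 = 1/18"
| "F_ex L2 = 8/18"
| "F_ex R1 = 1/18"
| "F_ex R2 = 8/18"

fun isL :: "ex_type \<Rightarrow> bool" where
  "isL L1 = True" | "isL L2 = True" | "isL R1 = False" | "isL R2 = False"

text \<open>Actions of a type after
an own message that type never sends are irrelevant and fixed arbitrarily.\<close>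
fun act_ex :: "ex_type \<Rightarrow> ex_msg \<Rightarrow> ex_msg \<Rightarrow> real" where
  "act_ex t mL mL = 1"
| "act_ex t mR mR = 0"
| "act_ex t mL mR = (if t = L1 then 1 else 0)"
| "act_ex t mR mL = (if t = R1 then 0 else 1)"

definition sigma_ex :: "(ex_type, ex_msg) strategy" where
  "sigma_ex = ((\<lambda>t m. if isL t = (m = mL) then 1 else 0), act_ex)"

end

theory Submission
  imports Defs
begin

text \<open>After the message pair (mL, mR) the types L2 and R2 get only 1/9 under sigma_ex, and the
  profile trump1/trump2 raises their payoffs to 85/117 while L1 and R1 keep 16/9; so sigma_ex is
  not strongly communication-proof.  After (mL, mL) or (mR, mR) every type already gets the maximal
  payoff 2, so only trumps after (mL, mR) and its mirror image have to be retrumped.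

  Let (tau1, tau2) be such a trump and suppose neither pooling profile (everybody sends mL and then
  plays L, respectively R) CP trumps it after any message pair.  Then every message cell of
  (tau1, tau2) is coordinated on L, coordinated on R, or miscoordinated exactly as sigma_ex is after
  (mL, mR).  If some cell is miscoordinated, the equilibrium conditions in the neighbouring cells
  pin the payoffs down to those of sigma_ex, so (tau1, tau2) is no trump.  Otherwise L1 and L2 have
  the same best-reply value in every cell, so L2 earns at least as much as L1, and likewise R2 at
  least as much as R1; as a coordinated cell yields the total payoff 3 per unit of mass, the
  payoff 16/9 demanded for L1 and R1 would force a total of at least 32/9 > 3.\<close>

text \<open>Payoffs are kept unnormalised: the opponent population has mass Y, of which mass Q plays L.\<close>
definition mass_pay :: "payoff \<Rightarrow> real \<Rightarrow> real \<Rightarrow> real \<Rightarrow> real" where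
  "mass_pay v p Q Y = (case v of (uLL, uLR, uRL, uRR) \<Rightarrow>
      p * Q * uLL + p * (Y - Q) * uLR + (1 - p) * Q * uRL + (1 - p) * (Y - Q) * uRR)"

definition best_mass_pay :: "payoff \<Rightarrow> real \<Rightarrow> real \<Rightarrow> real" where
  "best_mass_pay v Q Y = max (mass_pay v 1 Q Y) (mass_pay v 0 Q Y)"

definition L_mass :: "('a::finite \<Rightarrow> real) \<Rightarrow> ('a, 'm) strategy \<Rightarrow> 'm \<Rightarrow> 'm \<Rightarrow> real" where
  "L_mass H s m' m = (\<Sum>t\<in>UNIV. H t * fst s t m' * snd s t m' m)"

definition message_value ::
  "('a \<Rightarrow> payoff) \<Rightarrow> 'a \<Rightarrow> ('a::finite \<Rightarrow> real) \<Rightarrow> ('a, 'm::finite) strategy \<Rightarrow> 'm \<Rightarrow> real" where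
  "message_value u t H s' m =
     (\<Sum>m'\<in>UNIV. best_mass_pay (u t) (L_mass H s' m' m) (msg_prob H s' m'))"

lemma mass_pay_affine: "mass_pay v p Q Y = p * mass_pay v 1 Q Y + (1 - p) * mass_pay v 0 Q Y"
  by (cases v) (simp add: mass_pay_def algebra_simps)

lemma mass_pay_le_best: "0 \<le> p \<Longrightarrow> p \<le> 1 \<Longrightarrow> mass_pay v p Q Y \<le> best_mass_pay v Q Y"
  by (subst mass_pay_affine) (rule convex_bound_le, auto simp: best_mass_pay_def)

lemma best_reply_L:
  assumes "mass_pay v p Q Y = best_mass_pay v Q Y" "mass_pay v 0 Q Y < mass_pay v 1 Q Y"
  shows "p = 1"
proof -
  have "(1 - p) * (mass_pay v 0 Q Y - mass_pay v 1 Q Y) = 0"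
    using assms by (subst (asm) mass_pay_affine) (simp add: best_mass_pay_def algebra_simps)
  then show ?thesis using assms(2) by simp
qed

lemma best_reply_R:
  assumes "mass_pay v p Q Y = best_mass_pay v Q Y" "mass_pay v 1 Q Y < mass_pay v 0 Q Y"
  shows "p = 0"
proof -
  have "p * (mass_pay v 1 Q Y - mass_pay v 0 Q Y) = 0"
    using assms by (subst (asm) mass_pay_affine) (simp add: best_mass_pay_def algebra_simps)
  then show ?thesis using assms(2) by simp
qed

lemma mass_pay_divide: "c \<noteq> 0 \<Longrightarrow> mass_pay v p (Q / c) (Y / c) = mass_pay v p Q Y / c"
  by (cases v) (simp add: mass_pay_def field_simps)

lemma sum_exp_pay_eq_mass_pay:
  "(\<Sum>t\<in>A. w t * exp_pay v p (q t)) = mass_pay v p (\<Sum>t\<in>A. w t * q t) (\<Sum>t\<in>A. w t)"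
  by (cases v) (simp add: exp_pay_def mass_pay_def sum_distrib_left sum_distrib_right
      sum.distrib sum_subtractf algebra_simps)

lemma type_payoff_eq_mass_pay:
  "type_payoff u t \<mu> a H s' =
     (\<Sum>m\<in>UNIV. \<mu> m * (\<Sum>m'\<in>UNIV. mass_pay (u t) (a m m') (L_mass H s' m' m) (msg_prob H s' m')))"
proof -
  have "type_payoff u t \<mu> a H s' = (\<Sum>m\<in>UNIV. \<mu> m * (\<Sum>m'\<in>UNIV. \<Sum>t'\<in>UNIV.
          (H t' * fst s' t' m') * exp_pay (u t) (a m m') (snd s' t' m' m)))"
    unfolding type_payoff_def
    by (rule sum.cong[OF refl], subst sum.swap) (simp add: sum_distrib_left algebra_simps)
  then show ?thesis
    by (simp only: sum_exp_pay_eq_mass_pay) (simp add: L_mass_def msg_prob_def)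
qed

lemma pc_pay_eq_mass_pay:
  assumes "msg_prob H s' m' \<noteq> 0"
  shows "pc_pay u s s' H m m' t =
     mass_pay (u t) (snd s t m m') (L_mass H s' m' m) (msg_prob H s' m') / msg_prob H s' m'"
proof -
  have "pc_pay u s s' H m m' t = (\<Sum>t'\<in>UNIV. (H t' * fst s' t' m' / msg_prob H s' m') *
          exp_pay (u t) (snd s t m m') (snd s' t' m' m))"
    unfolding pc_pay_def post_def by simp
  also have "\<dots> = mass_pay (u t) (snd s t m m')
      (L_mass H s' m' m / msg_prob H s' m') (msg_prob H s' m' / msg_prob H s' m')"
    by (simp only: sum_exp_pay_eq_mass_pay, unfold L_mass_def msg_prob_def sum_divide_distrib, simp)
  also have "\<dots> = mass_pay (u t) (snd s t m m') (L_mass H s' m' m) (msg_prob H s' m') / msg_prob H s' m'"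
    by (rule mass_pay_divide[OF assms])
  finally show ?thesis .
qed

lemma type_payoff_le_message_value:
  assumes "is_dist \<mu>" "\<forall>m m'. 0 \<le> a m m' \<and> a m m' \<le> 1" "\<And>m. message_value u t H s' m \<le> B"
  shows "type_payoff u t \<mu> a H s' \<le> B"
proof -
  have "type_payoff u t \<mu> a H s' \<le> (\<Sum>m\<in>UNIV. \<mu> m * B)"
    unfolding type_payoff_eq_mass_pay
  proof (intro sum_mono mult_left_mono)
    fix m
    show "0 \<le> \<mu> m" using assms(1) by (simp add: is_dist_def)
    have "(\<Sum>m'\<in>UNIV. mass_pay (u t) (a m m') (L_mass H s' m' m) (msg_prob H s' m'))
        \<le> message_value u t H s' m"
      unfolding message_value_def using assms(2) by (intro sum_mono mass_pay_le_best) auto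
    then show "(\<Sum>m'\<in>UNIV. mass_pay (u t) (a m m') (L_mass H s' m' m) (msg_prob H s' m')) \<le> B"
      using assms(3) by (rule order_trans)
  qed
  also have "\<dots> = B" using assms(1) by (simp add: is_dist_def sum_distrib_right[symmetric])
  finally show ?thesis .
qed

lemma is_eqI_message_value:
  assumes "valid_strategy s1" "valid_strategy s2"
    "\<And>t m. G t > 0 \<Longrightarrow> message_value u t H s2 m \<le> eq_pay u t s1 H s2"
    "\<And>t m. H t > 0 \<Longrightarrow> message_value u t G s1 m \<le> eq_pay u t s2 G s1"
  shows "is_eq u G H s1 s2"
  unfolding is_eq_def using assms by (auto intro!: type_payoff_le_message_value)

lemma is_eq_swap: "is_eq u G H s1 s2 \<Longrightarrow> is_eq u H G s2 s1"
  unfolding is_eq_def by blast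

lemma CP_trumps_swap: "CP_trumps u t1 t2 s1 s2 G H m m' \<Longrightarrow> CP_trumps u t2 t1 s2 s1 H G m' m"
  unfolding CP_trumps_def using is_eq_swap by blast

lemma message_value_le_eq_pay:
  assumes "is_eq u G H s1 s2" "G t > 0"
  shows "message_value u t H s2 n \<le> eq_pay u t s1 H s2"
proof -
  define \<mu> :: "'b \<Rightarrow> real" where "\<mu> = (\<lambda>m. if m = n then 1 else 0)"
  define a where "a = (\<lambda>m m'. if mass_pay (u t) 0 (L_mass H s2 m' m) (msg_prob H s2 m')
      \<le> mass_pay (u t) 1 (L_mass H s2 m' m) (msg_prob H s2 m') then 1 else (0::real))"
  have "type_payoff u t \<mu> a H s2 \<le> eq_pay u t s1 H s2"
    using assms unfolding is_eq_def by (simp add: is_dist_def \<mu>_def a_def)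
  moreover have "type_payoff u t \<mu> a H s2 = message_value u t H s2 n"
    unfolding type_payoff_eq_mass_pay message_value_def
    by (simp add: \<mu>_def if_distrib[of "\<lambda>c. c * _"] cong: if_cong)
      (rule sum.cong, auto simp: a_def best_mass_pay_def)
  ultimately show ?thesis by simp
qed

lemma average_attains_bound:
  fixes x W :: "'m::finite \<Rightarrow> real"
  assumes "is_dist x" "\<And>m. W m \<le> U" "(\<Sum>m\<in>UNIV. x m * W m) = U" "x n > 0"
  shows "W n = U"
proof -
  have "(\<Sum>m\<in>UNIV. x m * (U - W m)) = 0"
    using assms(1,3) by (simp add: is_dist_def right_diff_distrib sum_subtractf flip: sum_distrib_right)
  then have "x n * (U - W n) = 0"
    using assms(1,2) by (subst (asm) sum_nonneg_eq_0_iff) (auto simp: is_dist_def)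
  then show ?thesis using assms(4) by simp
qed

text \<open>The equilibrium payoff averages the values achieved after the messages, none of which
  exceeds it.\<close>
lemma sent_message_value:
  assumes eq: "is_eq u G H s1 s2" and "G t > 0" "fst s1 t n > 0"
  shows "eq_pay u t s1 H s2 = message_value u t H s2 n"
    and "mass_pay (u t) (snd s1 t n n') (L_mass H s2 n' n) (msg_prob H s2 n')
       = best_mass_pay (u t) (L_mass H s2 n' n) (msg_prob H s2 n')"
proof -
  define W where "W m = (\<Sum>m'\<in>UNIV. mass_pay (u t) (snd s1 t m m') (L_mass H s2 m' m) (msg_prob H s2 m'))"
    for m
  have valid: "is_dist (fst s1 t)" "\<And>m m'. 0 \<le> snd s1 t m m' \<and> snd s1 t m m' \<le> 1"
    using eq by (auto simp: is_eq_def valid_strategy_def)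
  have W_le: "W m \<le> message_value u t H s2 m" for m
    unfolding W_def message_value_def using valid(2) by (intro sum_mono mass_pay_le_best) auto
  have "W n = eq_pay u t s1 H s2"
  proof (rule average_attains_bound[OF valid(1) _ _ assms(3)])
    show "W m \<le> eq_pay u t s1 H s2" for m
      using W_le message_value_le_eq_pay[OF eq assms(2)] by (rule order_trans)
    show "(\<Sum>m\<in>UNIV. fst s1 t m * W m) = eq_pay u t s1 H s2"
      unfolding eq_pay_def type_payoff_eq_mass_pay W_def by simp
  qed
  then show sent_value: "eq_pay u t s1 H s2 = message_value u t H s2 n"
    using W_le[of n] message_value_le_eq_pay[OF eq assms(2)] by (simp add: order_antisym)
  have "(\<Sum>m'\<in>UNIV. best_mass_pay (u t) (L_mass H s2 m' n) (msg_prob H s2 m')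
      - mass_pay (u t) (snd s1 t n m') (L_mass H s2 m' n) (msg_prob H s2 m')) = 0"
    using sent_value \<open>W n = eq_pay u t s1 H s2\<close> by (simp add: sum_subtractf W_def message_value_def)
  then show "mass_pay (u t) (snd s1 t n n') (L_mass H s2 n' n) (msg_prob H s2 n')
       = best_mass_pay (u t) (L_mass H s2 n' n) (msg_prob H s2 n')"
    using valid(2) mass_pay_le_best by (simp add: sum_nonneg_eq_0_iff)
qed

lemma sum_msg_prob:
  assumes "sum H UNIV = 1" "valid_strategy s"
  shows "(\<Sum>m\<in>UNIV. msg_prob H s m) = 1"
proof -
  have "(\<Sum>m\<in>UNIV. msg_prob H s m) = (\<Sum>t\<in>UNIV. H t * (\<Sum>m\<in>UNIV. fst s t m))"
    unfolding msg_prob_def by (subst sum.swap) (simp add: sum_distrib_left)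
  also have "\<dots> = 1" using assms by (simp add: valid_strategy_def is_dist_def)
  finally show ?thesis .
qed

lemma L_mass_bounds:
  assumes "valid_strategy s" "\<And>t. 0 \<le> H t"
  shows "0 \<le> L_mass H s m' m" "L_mass H s m' m \<le> msg_prob H s m'"
proof -
  have v: "\<And>t. 0 \<le> fst s t m'" "\<And>t. 0 \<le> snd s t m' m" "\<And>t. snd s t m' m \<le> 1"
    using assms(1) by (auto simp: valid_strategy_def is_dist_def)
  show "0 \<le> L_mass H s m' m" unfolding L_mass_def using v assms(2) by (intro sum_nonneg) simp
  show "L_mass H s m' m \<le> msg_prob H s m'" unfolding L_mass_def msg_prob_def
    using v assms(2) by (intro sum_mono) (simp add: mult_left_le)
qed

lemma L_mass_eq_msg_prob:
  assumes "\<And>t. H t * fst s t m' \<noteq> 0 \<Longrightarrow> snd s t m' m = 1"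
  shows "L_mass H s m' m = msg_prob H s m'"
  unfolding L_mass_def msg_prob_def by (intro sum.cong refl) (metis assms mult.right_neutral mult_zero_left)

lemma L_mass_eq_0:
  assumes "\<And>t. H t * fst s t m' \<noteq> 0 \<Longrightarrow> snd s t m' m = 0"
  shows "L_mass H s m' m = 0"
  unfolding L_mass_def by (intro sum.neutral) (metis assms mult_zero_left mult_zero_right)

lemma post_pos_iff:
  assumes "valid_strategy s" "\<And>t. 0 \<le> G t" "msg_prob G s m > 0"
  shows "post G s m t > 0 \<longleftrightarrow> G t * fst s t m \<noteq> 0"
  using assms by (auto simp: post_def valid_strategy_def is_dist_def less_le)

lemma post_nonneg: "valid_strategy s \<Longrightarrow> (\<And>t. 0 \<le> G t) \<Longrightarrow> 0 \<le> post G s m t"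
  unfolding post_def msg_prob_def valid_strategy_def is_dist_def
  by (intro divide_nonneg_nonneg sum_nonneg mult_nonneg_nonneg) auto

lemma sum_post: "msg_prob G s m \<noteq> 0 \<Longrightarrow> sum (post G s m) UNIV = 1"
  unfolding post_def msg_prob_def by (simp add: sum_divide_distrib[symmetric])

text \<open>Keeping u_ex L1 etc. folded lets mass_pay_ex and best_mass_pay_ex act as rewrite rules.\<close>
declare u_ex.simps [simp del]

lemma UNIV_ex_type: "(UNIV :: ex_type set) = {L1, L2, R1, R2}"
  using ex_type.exhaust by auto

lemma sum_ex_type: "(\<Sum>t\<in>UNIV. f t) = f L1 + f L2 + f R1 + (f R2 :: real)"
  by (simp add: UNIV_ex_type)

lemma all_ex_type: "(\<forall>t. P t) \<longleftrightarrow> P L1 \<and> P L2 \<and> P R1 \<and> P R2"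
  by (metis ex_type.exhaust)

lemma ex_ex_type: "(\<exists>t. P t) \<longleftrightarrow> P L1 \<or> P L2 \<or> P R1 \<or> P R2"
  by (metis ex_type.exhaust)

fun oth :: "ex_msg \<Rightarrow> ex_msg" where
  "oth mL = mR" | "oth mR = mL"

lemma UNIV_ex_msg: "(UNIV :: ex_msg set) = {mL, mR}"
  using ex_msg.exhaust by auto

lemma all_ex_msg: "(\<forall>m. P m) \<longleftrightarrow> P mL \<and> P mR"
  by (metis ex_msg.exhaust)

lemma sum_ex_msg: "(\<Sum>m\<in>UNIV. f m) = f n + (f (oth n) :: real)"
  by (cases n) (simp_all add: UNIV_ex_msg)

lemma mass_pay_ex:
  "mass_pay (u_ex L1) p Q Y = p * (2*Q) + (1 - p) * (Y - Q)"
  "mass_pay (u_ex L2) p Q Y = p * (17*Q - 15*Y) + (1 - p) * (Y - Q)"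
  "mass_pay (u_ex R1) p Q Y = p * Q + (1 - p) * (2*Y - 2*Q)"
  "mass_pay (u_ex R2) p Q Y = p * Q + (1 - p) * (2*Y - 17*Q)"
  by (simp_all add: mass_pay_def u_ex.simps algebra_simps)

lemma best_mass_pay_ex:
  "best_mass_pay (u_ex L1) Q Y = max (2*Q) (Y - Q)"
  "best_mass_pay (u_ex L2) Q Y = max (17*Q - 15*Y) (Y - Q)"
  "best_mass_pay (u_ex R1) Q Y = max Q (2*Y - 2*Q)"
  "best_mass_pay (u_ex R2) Q Y = max Q (2*Y - 17*Q)"
  by (simp_all only: best_mass_pay_def mass_pay_ex) simp_all

lemma mass_pay_ex_le:
  assumes "0 \<le> p" "p \<le> 1" "0 \<le> Q" "Q \<le> Y"
  shows "mass_pay (u_ex t) p Q Y \<le> 2 * Y"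
  using assms by (cases t) (simp_all only: mass_pay_ex; rule convex_bound_le; simp)+

lemma best_mass_pay_ex_le: "0 \<le> Q \<Longrightarrow> Q \<le> Y \<Longrightarrow> best_mass_pay (u_ex t) Q Y \<le> 2 * Y"
  by (simp add: best_mass_pay_def mass_pay_ex_le)

lemma eq_pay_ex_le:
  assumes "valid_strategy s1" "valid_strategy s2" "\<And>t. 0 \<le> H t" "sum H UNIV = 1"
  shows "eq_pay u_ex t s1 H s2 \<le> 2"
proof -
  have s1: "is_dist (fst s1 t)" "\<And>m m'. 0 \<le> snd s1 t m m' \<and> snd s1 t m m' \<le> 1"
    using assms(1) by (auto simp: valid_strategy_def)
  have "eq_pay u_ex t s1 H s2 \<le> (\<Sum>m\<in>UNIV. fst s1 t m * (\<Sum>m'\<in>UNIV. 2 * msg_prob H s2 m'))"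
    unfolding eq_pay_def type_payoff_eq_mass_pay
    using s1 L_mass_bounds[OF assms(2,3)]
    by (intro sum_mono mult_left_mono mass_pay_ex_le) (auto simp: is_dist_def)
  also have "\<dots> = 2"
    using sum_msg_prob[OF assms(4,2)] s1(1)
    by (simp add: is_dist_def flip: sum_distrib_left sum_distrib_right)
  finally show ?thesis .
qed

fun postL :: "ex_type \<Rightarrow> real" where
  "postL L1 = 1/9" | "postL L2 = 8/9" | "postL R1 = 0" | "postL R2 = 0"

fun postR :: "ex_type \<Rightarrow> real" where
  "postR L1 = 0" | "postR L2 = 0" | "postR R1 = 1/9" | "postR R2 = 8/9"

lemma msg_prob_sigma_ex: "msg_prob F_ex sigma_ex m = 1/2"
  by (cases m) (simp_all add: msg_prob_def sum_ex_type sigma_ex_def)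

lemma post_sigma_ex: "post F_ex sigma_ex mL = postL" "post F_ex sigma_ex mR = postR"
  by (rule ext, case_tac x; simp add: post_def msg_prob_sigma_ex; simp add: sigma_ex_def)+

lemma valid_sigma_ex: "valid_strategy sigma_ex"
  unfolding valid_strategy_def is_dist_def sigma_ex_def
  by (simp add: sum_ex_msg[of _ mL], intro allI, case_tac m; case_tac m'; simp)

lemma sigma_ex_eq: "is_eq u_ex F_ex F_ex sigma_ex sigma_ex"
proof -
  have "message_value u_ex t F_ex sigma_ex m \<le> eq_pay u_ex t sigma_ex F_ex sigma_ex" for t m
    by (cases t; cases m) (simp_all add: message_value_def eq_pay_def type_payoff_eq_mass_pay
        best_mass_pay_def mass_pay_def u_ex.simps L_mass_def msg_prob_def sum_ex_type sum_ex_msg[of _ mL] sigma_ex_def)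
  then show ?thesis by (intro is_eqI_message_value valid_sigma_ex)
qed

lemma postL_postR_nonneg: "0 \<le> postL t" "0 \<le> postR t"
  by (cases t; simp)+

lemma sum_postL_postR: "sum postL UNIV = 1" "sum postR UNIV = 1"
  by (simp_all add: sum_ex_type)

lemma pc_pay_sigma_ex:
  "pc_pay u_ex sigma_ex sigma_ex F_ex mL mR L1 = 16/9"
  "pc_pay u_ex sigma_ex sigma_ex F_ex mL mR L2 = 1/9"
  "pc_pay u_ex sigma_ex sigma_ex F_ex mR mL R1 = 16/9"
  "pc_pay u_ex sigma_ex sigma_ex F_ex mR mL R2 = 1/9"
  by (simp_all add: pc_pay_def post_sigma_ex sum_ex_type exp_pay_def u_ex.simps, simp_all add: sigma_ex_def)

lemma pc_pay_sigma_ex_coordinated: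
  "post F_ex sigma_ex m t > 0 \<Longrightarrow> pc_pay u_ex sigma_ex sigma_ex F_ex m m t = 2"
  by (cases m; cases t) (simp_all add: pc_pay_def post_sigma_ex sum_ex_type exp_pay_def u_ex.simps,
      simp_all add: sigma_ex_def)

lemma no_CP_trumps_sigma_ex_coordinated: "\<not> CP_trumps u_ex \<tau>1 \<tau>2 sigma_ex sigma_ex F_ex F_ex m m"
proof
  assume trumps: "CP_trumps u_ex \<tau>1 \<tau>2 sigma_ex sigma_ex F_ex F_ex m m"
  let ?F = "post F_ex sigma_ex m"
  have "is_eq u_ex ?F ?F \<tau>1 \<tau>2" using trumps by (simp add: CP_trumps_def)
  then have valid: "valid_strategy \<tau>1" "valid_strategy \<tau>2" by (simp_all add: is_eq_def)
  have F: "\<And>t. 0 \<le> ?F t" "sum ?F UNIV = 1"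
    by (cases m; simp add: post_sigma_ex postL_postR_nonneg sum_postL_postR)+
  have le_two: "eq_pay u_ex t \<tau>1 ?F \<tau>2 \<le> 2" "eq_pay u_ex t \<tau>2 ?F \<tau>1 \<le> 2" for t
    using eq_pay_ex_le[OF valid F] eq_pay_ex_le[OF valid(2,1) F] by auto
  from trumps have "(\<exists>t. ?F t > 0 \<and> pc_pay u_ex sigma_ex sigma_ex F_ex m m t < eq_pay u_ex t \<tau>1 ?F \<tau>2)
      \<or> (\<exists>t. ?F t > 0 \<and> pc_pay u_ex sigma_ex sigma_ex F_ex m m t < eq_pay u_ex t \<tau>2 ?F \<tau>1)"
    by (simp add: CP_trumps_def)
  then show False using le_two pc_pay_sigma_ex_coordinated by (metis not_less)
qed

fun trump1_msg :: "ex_type \<Rightarrow> ex_msg \<Rightarrow> real" where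
  "trump1_msg L2 mL = 17/26" | "trump1_msg L2 mR = 9/26"
| "trump1_msg t mL = 1" | "trump1_msg t mR = 0"

fun trump1_act :: "ex_type \<Rightarrow> ex_msg \<Rightarrow> ex_msg \<Rightarrow> real" where
  "trump1_act L2 mL mL = 1" | "trump1_act L2 mL mR = 0"
| "trump1_act L2 mR mL = 1/9" | "trump1_act L2 mR mR = 0"
| "trump1_act t m m' = 1"

fun trump2_msg :: "ex_type \<Rightarrow> ex_msg \<Rightarrow> real" where
  "trump2_msg R2 mL = 9/26" | "trump2_msg R2 mR = 17/26"
| "trump2_msg t mL = 0" | "trump2_msg t mR = 1"

fun trump2_act :: "ex_type \<Rightarrow> ex_msg \<Rightarrow> ex_msg \<Rightarrow> real" where
  "trump2_act R2 mL mL = 1" | "trump2_act R2 mL mR = 8/9"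
| "trump2_act R2 mR mL = 1" | "trump2_act R2 mR mR = 0"
| "trump2_act t m m' = 0"

definition trump1 :: "(ex_type, ex_msg) strategy" where "trump1 = (trump1_msg, trump1_act)"
definition trump2 :: "(ex_type, ex_msg) strategy" where "trump2 = (trump2_msg, trump2_act)"

lemma trump_eq: "is_eq u_ex postL postR trump1 trump2"
proof (rule is_eqI_message_value)
  show "valid_strategy trump1" "valid_strategy trump2"
    unfolding valid_strategy_def is_dist_def trump1_def trump2_def
    by (simp_all add: sum_ex_msg[of _ mL] all_ex_type all_ex_msg)
  show "message_value u_ex t postR trump2 m \<le> eq_pay u_ex t trump1 postR trump2" if "postL t > 0" for t m
    using that by (cases t; cases m) (simp_all add: message_value_def eq_pay_def type_payoff_eq_mass_pay
        best_mass_pay_def mass_pay_def u_ex.simps L_mass_def msg_prob_def sum_ex_type sum_ex_msg[of _ mL] trump1_def trump2_def)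
  show "message_value u_ex t postL trump1 m \<le> eq_pay u_ex t trump2 postL trump1" if "postR t > 0" for t m
    using that by (cases t; cases m) (simp_all add: message_value_def eq_pay_def type_payoff_eq_mass_pay
        best_mass_pay_def mass_pay_def u_ex.simps L_mass_def msg_prob_def sum_ex_type sum_ex_msg[of _ mL] trump1_def trump2_def)
qed

lemma eq_pay_trump:
  "eq_pay u_ex L1 trump1 postR trump2 = 16/9" "eq_pay u_ex L2 trump1 postR trump2 = 85/117"
  "eq_pay u_ex R1 trump2 postL trump1 = 16/9" "eq_pay u_ex R2 trump2 postL trump1 = 85/117"
  by (simp_all add: eq_pay_def type_payoff_eq_mass_pay mass_pay_def u_ex.simps L_mass_def msg_prob_def
      sum_ex_type sum_ex_msg[of _ mL] trump1_def trump2_def)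

lemma not_strongly_CP_sigma_ex: "\<not> strongly_CP u_ex F_ex sigma_ex"
proof -
  have "CP_trumps u_ex trump1 trump2 sigma_ex sigma_ex F_ex F_ex mL mR"
    unfolding CP_trumps_def post_sigma_ex msg_prob_sigma_ex
    by (simp add: trump_eq all_ex_type ex_ex_type eq_pay_trump pc_pay_sigma_ex)
  then show ?thesis unfolding strongly_CP_def by blast
qed

definition pool_L :: "(ex_type, ex_msg) strategy" where
  "pool_L = ((\<lambda>t m. if m = mL then 1 else 0), (\<lambda>t m m'. 1))"

definition pool_R :: "(ex_type, ex_msg) strategy" where
  "pool_R = ((\<lambda>t m. if m = mL then 1 else 0), (\<lambda>t m m'. 0))"

lemma pool_masses:
  "msg_prob H pool_L m' = (if m' = mL then sum H UNIV else 0)"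
  "L_mass H pool_L m' m = (if m' = mL then sum H UNIV else 0)"
  "msg_prob H pool_R m' = (if m' = mL then sum H UNIV else 0)"
  "L_mass H pool_R m' m = 0"
  by (simp_all add: msg_prob_def L_mass_def pool_L_def pool_R_def)

lemma eq_pay_pool:
  "eq_pay u_ex t pool_L H pool_L = (if isL t then 2 else 1) * sum H UNIV"
  "eq_pay u_ex t pool_R H pool_R = (if isL t then 1 else 2) * sum H UNIV"
  by (cases t; simp add: eq_pay_def type_payoff_eq_mass_pay sum_ex_msg[of _ mL] pool_masses
      mass_pay_def u_ex.simps; simp add: pool_L_def pool_R_def)+

lemma message_value_pool:
  assumes "0 \<le> sum H UNIV"
  shows "message_value u_ex t H pool_L m = (if isL t then 2 else 1) * sum H UNIV"
    and "message_value u_ex t H pool_R m = (if isL t then 1 else 2) * sum H UNIV"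
  using assms by (cases t; simp add: message_value_def sum_ex_msg[of _ mL] pool_masses
      best_mass_pay_ex)+

lemma pool_eq:
  assumes "\<And>t. 0 \<le> G t" "\<And>t. 0 \<le> H t"
  shows "is_eq u_ex G H pool_L pool_L" "is_eq u_ex G H pool_R pool_R"
proof -
  have valid: "valid_strategy pool_L" "valid_strategy pool_R"
    by (simp_all add: valid_strategy_def is_dist_def sum_ex_msg[of _ mL] pool_L_def pool_R_def)
  have "0 \<le> sum G UNIV" "0 \<le> sum H UNIV" using assms by (simp_all add: sum_nonneg)
  then show "is_eq u_ex G H pool_L pool_L" "is_eq u_ex G H pool_R pool_R"
    by (intro is_eqI_message_value valid; simp add: message_value_pool eq_pay_pool)+
qed

lemma postL_pos_iff: "postL t > 0 \<longleftrightarrow> isL t"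
  and postR_pos_iff: "postR t > 0 \<longleftrightarrow> \<not> isL t"
  by (cases t; simp)+

text \<open>The cell (n, n') is where player 1 sends n and player 2 sends n'; X n and
  Y n' are the masses of these senders, P n n' and Q n n' the masses of them playing L, and
  wL, wR (vL, vR) are the actual (best-reply) payoffs of a type in the cell, weighted by the mass
  of the opponents in it; U and W are the equilibrium payoffs of the types of player 1 and 2.
  Note that Q n n' unfolds to a term in which n' precedes n.\<close>
locale pooling_proof =
  fixes \<tau>1 \<tau>2 :: "(ex_type, ex_msg) strategy"
  assumes eq: "is_eq u_ex postL postR \<tau>1 \<tau>2"
    and no_pool_L: "\<And>n n'. \<not> CP_trumps u_ex pool_L pool_L \<tau>1 \<tau>2 postL postR n n'"
    and no_pool_R: "\<And>n n'. \<not> CP_trumps u_ex pool_R pool_R \<tau>1 \<tau>2 postL postR n n'"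
begin

abbreviation "x t n \<equiv> fst \<tau>1 t n"
abbreviation "y t n' \<equiv> fst \<tau>2 t n'"
abbreviation "X n \<equiv> msg_prob postL \<tau>1 n"
abbreviation "Y n' \<equiv> msg_prob postR \<tau>2 n'"
abbreviation "P n n' \<equiv> L_mass postL \<tau>1 n n'"
abbreviation "Q n n' \<equiv> L_mass postR \<tau>2 n' n"
abbreviation "wL t n n' \<equiv> mass_pay (u_ex t) (snd \<tau>1 t n n') (Q n n') (Y n')"
abbreviation "wR t n n' \<equiv> mass_pay (u_ex t) (snd \<tau>2 t n' n) (P n n') (X n)"
abbreviation "vL t n n' \<equiv> best_mass_pay (u_ex t) (Q n n') (Y n')"
abbreviation "vR t n n' \<equiv> best_mass_pay (u_ex t) (P n n') (X n)"
abbreviation "U t \<equiv> eq_pay u_ex t \<tau>1 postR \<tau>2"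
abbreviation "W t \<equiv> eq_pay u_ex t \<tau>2 postL \<tau>1"

lemma valid: "valid_strategy \<tau>1" "valid_strategy \<tau>2"
  using eq by (simp_all add: is_eq_def)

lemma strategy_bounds:
  "0 \<le> x t n" "0 \<le> y t n" "0 \<le> snd \<tau>1 t n n'" "snd \<tau>1 t n n' \<le> 1"
  "0 \<le> snd \<tau>2 t n n'" "snd \<tau>2 t n n' \<le> 1"
  using valid by (auto simp: valid_strategy_def is_dist_def)

lemma X_eq: "X n = x L1 n / 9 + 8 * x L2 n / 9"
  and Y_eq: "Y n' = y R1 n' / 9 + 8 * y R2 n' / 9"
  by (simp_all add: msg_prob_def sum_ex_type)

lemma mass_bounds: "0 \<le> Q n n'" "Q n n' \<le> Y n'" "0 \<le> P n n'" "P n n' \<le> X n"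
  using L_mass_bounds[OF valid(2), of postR] L_mass_bounds[OF valid(1), of postL]
  by (simp_all add: postL_postR_nonneg)

lemma X_sum: "X n + X (oth n) = 1"
  using sum_msg_prob[OF sum_postL_postR(1) valid(1)] by (simp add: sum_ex_msg[of _ n])

lemma Y_sum: "Y n' + Y (oth n') = 1"
  using sum_msg_prob[OF sum_postL_postR(2) valid(2)] by (simp add: sum_ex_msg[of _ n'])

lemma L_sender:
  assumes "X n > 0" shows "\<exists>t. isL t \<and> x t n > 0"
proof (rule ccontr)
  assume "\<not> ?thesis"
  then have "x L1 n \<le> 0" "x L2 n \<le> 0" by (metis isL.simps not_less)+
  then show False using assms by (simp add: X_eq)
qed

lemma R_sender:
  assumes "Y n' > 0" shows "\<exists>t. \<not> isL t \<and> y t n' > 0"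
proof (rule ccontr)
  assume "\<not> ?thesis"
  then have "y R1 n' \<le> 0" "y R2 n' \<le> 0" by (metis isL.simps not_less)+
  then show False using assms by (simp add: Y_eq)
qed

lemma L_payoff_ge: "isL t \<Longrightarrow> vL t n n' + vL t n (oth n') \<le> U t"
  using message_value_le_eq_pay[OF eq, of t n]
  by (simp add: message_value_def sum_ex_msg[of _ n'] postL_pos_iff)

lemma R_payoff_ge: "\<not> isL t \<Longrightarrow> vR t n n' + vR t (oth n) n' \<le> W t"
  using message_value_le_eq_pay[OF is_eq_swap[OF eq], of t n']
  by (simp add: message_value_def sum_ex_msg[of _ n] postR_pos_iff)

lemma L_payoff_eq: "isL t \<Longrightarrow> x t n > 0 \<Longrightarrow> U t = vL t n n' + vL t n (oth n')"
  and L_best_reply: "isL t \<Longrightarrow> x t n > 0 \<Longrightarrow> wL t n n' = vL t n n'"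
  using sent_message_value[OF eq, of t n]
  by (simp_all add: message_value_def sum_ex_msg[of _ n'] postL_pos_iff)

lemma R_payoff_eq: "\<not> isL t \<Longrightarrow> y t n' > 0 \<Longrightarrow> W t = vR t n n' + vR t (oth n) n'"
  and R_best_reply: "\<not> isL t \<Longrightarrow> y t n' > 0 \<Longrightarrow> wR t n n' = vR t n n'"
  using sent_message_value[OF is_eq_swap[OF eq], of t n']
  by (simp_all add: message_value_def sum_ex_msg[of _ n] postR_pos_iff)

lemma cell_payoff_le: "wL t n n' \<le> 2 * Y n'" "wR t n n' \<le> 2 * X n"
  by (intro mass_pay_ex_le strategy_bounds mass_bounds)+

lemma post_postL_pos_iff: "X n > 0 \<Longrightarrow> post postL \<tau>1 n t > 0 \<longleftrightarrow> isL t \<and> x t n > 0"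
  using post_pos_iff[OF valid(1) postL_postR_nonneg(1)] strategy_bounds(1)[of t n]
  by (cases t) (simp_all add: less_le)

lemma post_postR_pos_iff: "Y n' > 0 \<Longrightarrow> post postR \<tau>2 n' t > 0 \<longleftrightarrow> \<not> isL t \<and> y t n' > 0"
  using post_pos_iff[OF valid(2) postL_postR_nonneg(2)] strategy_bounds(2)[of t n']
  by (cases t) (simp_all add: less_le)

lemma pool_eq_posteriors:
  "is_eq u_ex (post postL \<tau>1 n) (post postR \<tau>2 n') pool_L pool_L"
  "is_eq u_ex (post postL \<tau>1 n) (post postR \<tau>2 n') pool_R pool_R"
  by (intro pool_eq post_nonneg valid postL_postR_nonneg)+

lemma pc_pay_cell:
  "Y n' > 0 \<Longrightarrow> pc_pay u_ex \<tau>1 \<tau>2 postR n n' t = wL t n n' / Y n'"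
  "X n > 0 \<Longrightarrow> pc_pay u_ex \<tau>2 \<tau>1 postL n' n t = wR t n n' / X n"
  by (simp_all add: pc_pay_eq_mass_pay)

lemma eq_pay_pool_posteriors:
  "X n > 0 \<Longrightarrow> eq_pay u_ex t pool_L (post postL \<tau>1 n) pool_L = (if isL t then 2 else 1)"
  "Y n' > 0 \<Longrightarrow> eq_pay u_ex t pool_L (post postR \<tau>2 n') pool_L = (if isL t then 2 else 1)"
  "X n > 0 \<Longrightarrow> eq_pay u_ex t pool_R (post postL \<tau>1 n) pool_R = (if isL t then 1 else 2)"
  "Y n' > 0 \<Longrightarrow> eq_pay u_ex t pool_R (post postR \<tau>2 n') pool_R = (if isL t then 1 else 2)"
  by (simp_all add: eq_pay_pool sum_post)

lemma no_pool_L_cell: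
  assumes "X n > 0" "Y n' > 0"
  shows "(\<exists>t. \<not> isL t \<and> y t n' > 0 \<and> X n < wR t n n') \<or>
    (\<forall>t. isL t \<longrightarrow> x t n > 0 \<longrightarrow> 2 * Y n' \<le> wL t n n')"
proof -
  have "\<not> ((\<forall>t. isL t \<and> x t n > 0 \<longrightarrow> wL t n n' \<le> 2 * Y n') \<and>
      (\<forall>t. \<not> isL t \<and> y t n' > 0 \<longrightarrow> wR t n n' \<le> X n) \<and>
      ((\<exists>t. isL t \<and> x t n > 0 \<and> wL t n n' < 2 * Y n') \<or>
       (\<exists>t. \<not> isL t \<and> y t n' > 0 \<and> wR t n n' < X n)))"
    using no_pool_L[of n n'] assms
    unfolding CP_trumps_def
    by (simp add: post_postL_pos_iff post_postR_pos_iff pool_eq_posteriors pc_pay_cell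
        eq_pay_pool_posteriors divide_le_eq divide_less_eq) (auto split: if_splits)
  then show ?thesis using cell_payoff_le by (auto simp: not_less)
qed

lemma no_pool_R_cell:
  assumes "X n > 0" "Y n' > 0"
  shows "(\<exists>t. isL t \<and> x t n > 0 \<and> Y n' < wL t n n') \<or>
    (\<forall>t. \<not> isL t \<longrightarrow> y t n' > 0 \<longrightarrow> 2 * X n \<le> wR t n n')"
proof -
  have "\<not> ((\<forall>t. isL t \<and> x t n > 0 \<longrightarrow> wL t n n' \<le> Y n') \<and>
      (\<forall>t. \<not> isL t \<and> y t n' > 0 \<longrightarrow> wR t n n' \<le> 2 * X n) \<and>
      ((\<exists>t. isL t \<and> x t n > 0 \<and> wL t n n' < Y n') \<or>
       (\<exists>t. \<not> isL t \<and> y t n' > 0 \<and> wR t n n' < 2 * X n)))"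
    using no_pool_R[of n n'] assms
    unfolding CP_trumps_def
    by (simp add: post_postL_pos_iff post_postR_pos_iff pool_eq_posteriors pc_pay_cell
        eq_pay_pool_posteriors divide_le_eq divide_less_eq) (auto split: if_splits)
  then show ?thesis using cell_payoff_le by (auto simp: not_less)
qed

lemma postL_sends_iff: "postL t * x t n \<noteq> 0 \<longleftrightarrow> isL t \<and> x t n > 0"
  and postR_sends_iff: "postR t * y t n' \<noteq> 0 \<longleftrightarrow> \<not> isL t \<and> y t n' > 0"
  using strategy_bounds(1)[of t n] strategy_bounds(2)[of t n'] by (cases t; simp add: less_le)+

lemma L_value_ge_twice_mass: "isL t \<Longrightarrow> Y n' > 0 \<Longrightarrow> 2 * Y n' \<le> vL t n n' \<Longrightarrow> Q n n' = Y n'"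
  using mass_bounds[where n=n and n'=n'] by (cases t) (auto simp: best_mass_pay_ex max_def split: if_splits)

lemma R_value_ge_twice_mass: "\<not> isL t \<Longrightarrow> X n > 0 \<Longrightarrow> 2 * X n \<le> vR t n n' \<Longrightarrow> P n n' = 0"
  using mass_bounds[where n=n and n'=n'] by (cases t) (auto simp: best_mass_pay_ex max_def split: if_splits)

lemma L_plays_L:
  assumes "isL t" "x t n > 0" "Y n' > 0" "8 * Y n' < 9 * Q n n'"
  shows "snd \<tau>1 t n n' = 1"
proof (rule best_reply_L)
  show "wL t n n' = vL t n n'" by (rule L_best_reply[OF assms(1,2)])
  show "mass_pay (u_ex t) 0 (Q n n') (Y n') < mass_pay (u_ex t) 1 (Q n n') (Y n')"
    using assms(1,3,4) by (cases t) (simp_all add: mass_pay_ex)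
qed

lemma R_plays_R:
  assumes "\<not> isL t" "y t n' > 0" "X n > 0" "9 * P n n' < X n"
  shows "snd \<tau>2 t n' n = 0"
proof (rule best_reply_R)
  show "wR t n n' = vR t n n'" by (rule R_best_reply[OF assms(1,2)])
  show "mass_pay (u_ex t) 1 (P n n') (X n) < mass_pay (u_ex t) 0 (P n n') (X n)"
    using assms(1,3,4) by (cases t) (simp_all add: mass_pay_ex)
qed

text \<open>If both L types strictly prefer L, all senders play L, so no R type beats pooling on L
  and the L types must already get its payoff 2.\<close>
lemma cell_L_coordinated:
  assumes "X n > 0" "Y n' > 0" "8 * Y n' < 9 * Q n n'"
  shows "Q n n' = Y n' \<and> P n n' = X n"
proof
  show PX: "P n n' = X n"
    using assms by (intro L_mass_eq_msg_prob) (metis L_plays_L postL_sends_iff)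
  have "\<not> wR t n n' > X n" if "\<not> isL t" for t
  proof -
    have "snd \<tau>2 t n' n * X n \<le> X n"
      using assms(1) strategy_bounds(5,6) by (intro mult_left_le_one_le) simp_all
    then show ?thesis using that PX by (cases t) (simp_all add: mass_pay_ex algebra_simps)
  qed
  then have senders: "\<And>t. isL t \<Longrightarrow> x t n > 0 \<Longrightarrow> 2 * Y n' \<le> wL t n n'"
    using no_pool_L_cell[OF assms(1,2)] by blast
  obtain t where "isL t" "x t n > 0" using L_sender[OF assms(1)] by blast
  then show "Q n n' = Y n'"
    using senders L_best_reply L_value_ge_twice_mass assms(2) by metis
qed

lemma cell_R_coordinated:
  assumes "X n > 0" "Y n' > 0" "9 * P n n' < X n"
  shows "Q n n' = 0 \<and> P n n' = 0"
proof
  show Q0: "Q n n' = 0"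
    using assms by (intro L_mass_eq_0) (metis R_plays_R postR_sends_iff)
  have "\<not> wL t n n' > Y n'" if "isL t" for t
  proof -
    have "snd \<tau>1 t n n' * Y n' \<ge> 0"
      using assms(2) strategy_bounds(3) by simp
    then show ?thesis using that Q0 by (cases t) (simp_all add: mass_pay_ex algebra_simps)
  qed
  then have senders: "\<And>t. \<not> isL t \<Longrightarrow> y t n' > 0 \<Longrightarrow> 2 * X n \<le> wR t n n'"
    using no_pool_R_cell[OF assms(1,2)] by blast
  obtain t where "\<not> isL t" "y t n' > 0" using R_sender[OF assms(2)] by blast
  then show "P n n' = 0"
    using senders R_best_reply R_value_ge_twice_mass assms(1) by metis
qed

lemma L1_plays_L: "x L1 n > 0 \<Longrightarrow> Y n' < 2 * Q n n' \<Longrightarrow> snd \<tau>1 L1 n n' = 1"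
  by (rule best_reply_L[OF L_best_reply])
    (use mass_bounds[where n=n and n'=n'] in \<open>simp_all add: mass_pay_ex\<close>)

lemma R1_plays_R: "y R1 n' > 0 \<Longrightarrow> 2 * P n n' < X n \<Longrightarrow> snd \<tau>2 R1 n' n = 0"
  by (rule best_reply_R[OF R_best_reply])
    (use mass_bounds[where n=n and n'=n'] in \<open>simp_all add: mass_pay_ex\<close>)

text \<open>The pattern of sigma_ex after (mL, mR): L1 and R2 lean towards L, L2 and R1 towards R.\<close>
definition miscoordinated :: "ex_msg \<Rightarrow> ex_msg \<Rightarrow> bool" where
  "miscoordinated n n' \<longleftrightarrow> x L1 n > 0 \<and> x L2 n > 0 \<and> y R1 n' > 0 \<and> y R2 n' > 0 \<and>
     Y n' < 2 * Q n n' \<and> 9 * Q n n' \<le> 8 * Y n' \<and> X n \<le> 9 * P n n' \<and> 2 * P n n' < X n"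

text \<open>Here L2 and R2 cannot gain over pooling, and the L types (R types) fall short of pooling on
  L (on R); so R1 must gain over pooling on L, and L1 over pooling on R.\<close>
lemma miscoordinated_L1_R1:
  assumes "X n > 0" "Y n' > 0" "9 * Q n n' \<le> 8 * Y n'" "X n \<le> 9 * P n n'"
  shows "x L1 n > 0 \<and> Y n' < 2 * Q n n' \<and> y R1 n' > 0 \<and> 2 * P n n' < X n"
proof -
  note bounds = mass_bounds[where n=n and n'=n']
  have "\<not> 2 * Y n' \<le> wL t n n'" if "isL t" "x t n > 0" for t
  proof
    assume "2 * Y n' \<le> wL t n n'"
    then have "Q n n' = Y n'"
      using L_value_ge_twice_mass[OF that(1) assms(2)] L_best_reply[OF that] by simp
    then show False using assms(2,3) by simp
  qed
  moreover have R2_low: "\<not> X n < wR R2 n n'" if "y R2 n' > 0"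
    using R_best_reply[of R2, OF _ that] assms(4) bounds by (simp add: best_mass_pay_ex)
  ultimately obtain t where t: "\<not> isL t" "y t n' > 0" "X n < wR t n n'"
    using no_pool_L_cell[OF assms(1,2)] L_sender[OF assms(1)] by blast
  then have R1: "t = R1" using R2_low by (cases t) auto
  have "\<not> 2 * X n \<le> wR t n n'" if "\<not> isL t" "y t n' > 0" for t
  proof
    assume "2 * X n \<le> wR t n n'"
    then have "P n n' = 0"
      using R_value_ge_twice_mass[OF that(1) assms(1)] R_best_reply[OF that] by simp
    then show False using assms(1,4) by simp
  qed
  moreover have L2_low: "\<not> Y n' < wL L2 n n'" if "x L2 n > 0"
    using L_best_reply[of L2, OF _ that] assms(3) bounds by (simp add: best_mass_pay_ex)
  ultimately obtain s where s: "isL s" "x s n > 0" "Y n' < wL s n n'"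
    using no_pool_R_cell[OF assms(1,2)] R_sender[OF assms(2)] by blast
  then have L1: "s = L1" using L2_low by (cases s) auto
  show ?thesis
    using s t R_best_reply[OF t(1,2)] L_best_reply[OF s(1,2)] bounds
    by (simp add: L1 R1 best_mass_pay_ex max_def split: if_splits)
qed

lemma cell_miscoordinated:
  assumes "X n > 0" "Y n' > 0" "9 * Q n n' \<le> 8 * Y n'" "X n \<le> 9 * P n n'"
  shows "miscoordinated n n'"
proof -
  note L1_R1 = miscoordinated_L1_R1[OF assms]
  have "x L2 n > 0"
  proof (rule ccontr)
    assume "\<not> x L2 n > 0"
    then have "P n n' = X n"
      using L1_plays_L L1_R1 by (intro L_mass_eq_msg_prob) (metis postL_sends_iff isL.elims(2))
    then show False using L1_R1 assms(1) by simp
  qed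
  moreover have "y R2 n' > 0"
  proof (rule ccontr)
    assume "\<not> y R2 n' > 0"
    then have "Q n n' = 0"
      using R1_plays_R L1_R1 by (intro L_mass_eq_0) (metis postR_sends_iff isL.elims(3))
    then show False using L1_R1 assms(2) by simp
  qed
  ultimately show ?thesis using L1_R1 assms unfolding miscoordinated_def by blast
qed

lemma cell_cases:
  assumes "X n > 0" "Y n' > 0"
  shows "(Q n n' = Y n' \<and> P n n' = X n) \<or> (Q n n' = 0 \<and> P n n' = 0) \<or> miscoordinated n n'"
  using cell_L_coordinated[OF assms] cell_R_coordinated[OF assms] cell_miscoordinated[OF assms]
  by fastforce

lemma message_dist: "x t mL + x t mR = 1" "y t mL + y t mR = 1"
  using valid by (simp_all add: valid_strategy_def is_dist_def sum_ex_msg[of _ mL])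

lemma empty_cell: "\<not> X n > 0 \<Longrightarrow> X n = 0 \<and> P n n' = 0" "\<not> Y n' > 0 \<Longrightarrow> Y n' = 0 \<and> Q n n' = 0"
  using mass_bounds[where n=n and n'=n'] by linarith+

lemma L_values_agree:
  assumes "\<not> miscoordinated n n'" "X n > 0"
  shows "vL L1 n n' = vL L2 n n'"
proof (cases "Y n' > 0")
  case True
  then show ?thesis using cell_cases[OF assms(2) True] assms(1) by (auto simp: best_mass_pay_ex)
qed (simp add: empty_cell best_mass_pay_ex)

lemma R_values_agree:
  assumes "\<not> miscoordinated n n'" "Y n' > 0"
  shows "vR R1 n n' = vR R2 n n'"
proof (cases "X n > 0")
  case True
  then show ?thesis using cell_cases[OF True assms(2)] assms(1) by (auto simp: best_mass_pay_ex)
qed (simp add: empty_cell best_mass_pay_ex)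

text \<open>Without miscoordination each type gets its best value in every cell, and these add up
  to 3 per unit of mass: 2 to the side whose action is played, 1 to the other.\<close>
lemma cell_welfare:
  assumes "\<not> miscoordinated n n'"
  shows "x L1 n / 9 * vL L1 n n' + 8 * x L2 n / 9 * vL L2 n n'
    + (y R1 n' / 9 * vR R1 n n' + 8 * y R2 n' / 9 * vR R2 n n') = 3 * X n * Y n'"
proof (cases "X n > 0 \<and> Y n' > 0")
  case True
  then consider "Q n n' = Y n'" "P n n' = X n" | "Q n n' = 0" "P n n' = 0"
    using cell_cases assms by blast
  then show ?thesis using True by cases (simp_all add: best_mass_pay_ex X_eq Y_eq algebra_simps)
next
  case False
  then consider "X n = 0" "P n n' = 0" | "Y n' = 0" "Q n n' = 0" using empty_cell by blast
  then show ?thesis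
  proof cases
    case 1
    then have "x L1 n = 0" "x L2 n = 0"
      using X_eq[of n] strategy_bounds(1)[of L1 n] strategy_bounds(1)[of L2 n] by linarith+
    then show ?thesis using 1 by (simp add: best_mass_pay_ex)
  next
    case 2
    then have "y R1 n' = 0" "y R2 n' = 0"
      using Y_eq[of n'] strategy_bounds(2)[of R1 n'] strategy_bounds(2)[of R2 n'] by linarith+
    then show ?thesis using 2 by (simp add: best_mass_pay_ex)
  qed
qed

lemma sends_some_message: "x t mL > 0 \<or> x t mR > 0" "y t mL > 0 \<or> y t mR > 0"
  using message_dist[of t] by linarith+

lemma L2_payoff_ge_L1:
  assumes "\<forall>n n'. \<not> miscoordinated n n'"
  shows "U L1 \<le> U L2"
proof -
  obtain n where n: "x L1 n > 0" using sends_some_message(1) by blast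
  then have "X n > 0" using X_eq[of n] strategy_bounds(1)[of L2 n] by simp
  then have "U L1 = vL L2 n mL + vL L2 n (oth mL)"
    using L_payoff_eq[of L1 n mL] n L_values_agree assms by simp
  then show ?thesis using L_payoff_ge[where t=L2 and n=n and n'=mL] by simp
qed

lemma R2_payoff_ge_R1:
  assumes "\<forall>n n'. \<not> miscoordinated n n'"
  shows "W R1 \<le> W R2"
proof -
  obtain n' where n': "y R1 n' > 0" using sends_some_message(2) by blast
  then have "Y n' > 0" using Y_eq[of n'] strategy_bounds(2)[of R2 n'] by simp
  then have "W R1 = vR R2 mL n' + vR R2 (oth mL) n'"
    using R_payoff_eq[of R1 n' mL] n' R_values_agree assms by simp
  then show ?thesis using R_payoff_ge[of R2 mL n'] by simp
qed

lemma welfare: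
  assumes "\<forall>n n'. \<not> miscoordinated n n'"
  shows "U L1 / 9 + 8 * U L2 / 9 + W R1 / 9 + 8 * W R2 / 9 = 3"
proof -
  have L_gen: "x t n * U t = x t n * (vL t n mL + vL t n mR)" if "isL t" for t n
    using L_payoff_eq[OF that, of n mL] strategy_bounds(1)[of t n] by (cases "x t n > 0") auto
  have L: "x L1 n * U L1 = x L1 n * (vL L1 n mL + vL L1 n mR)"
    "x L2 n * U L2 = x L2 n * (vL L2 n mL + vL L2 n mR)" for n
    using L_gen[of L1 n] L_gen[of L2 n] by simp_all
  have R_gen: "y t n' * W t = y t n' * (vR t mL n' + vR t mR n')" if "\<not> isL t" for t n'
    using R_payoff_eq[OF that, of n' mL] strategy_bounds(2)[of t n'] by (cases "y t n' > 0") auto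
  have R: "y R1 n' * W R1 = y R1 n' * (vR R1 mL n' + vR R1 mR n')"
    "y R2 n' * W R2 = y R2 n' * (vR R2 mL n' + vR R2 mR n')" for n'
    using R_gen[of R1 n'] R_gen[of R2 n'] by simp_all
  have "U L1 / 9 + 8 * U L2 / 9 + W R1 / 9 + 8 * W R2 / 9
      = (x L1 mL * U L1 + x L1 mR * U L1) / 9 + 8 * (x L2 mL * U L2 + x L2 mR * U L2) / 9
      + (y R1 mL * W R1 + y R1 mR * W R1) / 9 + 8 * (y R2 mL * W R2 + y R2 mR * W R2) / 9"
    by (simp add: message_dist flip: distrib_right)
  also have "\<dots> = 3 * X mL * Y mL + 3 * X mL * Y mR + 3 * X mR * Y mL + 3 * X mR * Y mR"
    unfolding L R cell_welfare[OF spec[OF spec[OF assms]], symmetric]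
    by (simp add: algebra_simps add_divide_distrib)
  also have "\<dots> = 3 * (X mL + X mR) * (Y mL + Y mR)" by (simp add: algebra_simps)
  also have "\<dots> = 3" using X_sum[of mL] Y_sum[of mL] by simp
  finally show ?thesis .
qed

lemma value_bounds: "vL t n n' \<le> 2 * Y n'" "vR t n n' \<le> 2 * X n"
  "Y n' / 9 \<le> vL L2 n n'" "X n / 9 \<le> vR R2 n n'"
  using mass_bounds[where n=n and n'=n']
  by (simp_all add: best_mass_pay_ex_le best_mass_pay_ex max_def)

lemma miscoordinated_values:
  assumes "miscoordinated n n'"
  shows "vL L1 n n' = 2 * Q n n'" "vL L2 n n' = Y n' - Q n n'"
    "vR R1 n n' = 2 * X n - 2 * P n n'" "vR R2 n n' = P n n'"
  using assms mass_bounds[where n=n and n'=n']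
  by (simp_all add: miscoordinated_def best_mass_pay_ex max_def)

lemma miscoordinated_payoffs:
  assumes "miscoordinated A A'"
  shows "U L1 = 2 * Q A A' + vL L1 A (oth A')" "U L2 = Y A' - Q A A' + vL L2 A (oth A')"
    "W R1 = 2 * X A - 2 * P A A' + vR R1 (oth A) A'" "W R2 = P A A' + vR R2 (oth A) A'"
  using assms L_payoff_eq[of _ A A'] R_payoff_eq[of _ A' A]
  by (simp_all add: miscoordinated_def miscoordinated_values)

lemma L_payoffs_beside_miscoordinated:
  assumes mis: "miscoordinated A A'" and "16/9 \<le> U L1" "1/9 \<le> U L2"
  shows "(U L1 = 16/9 \<and> U L2 = 1/9) \<or>
    (Y (oth A') > 0 \<and> Q A (oth A') = Y (oth A') \<and> P A (oth A') = X A)"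
proof -
  have XA: "X A > 0" using mis strategy_bounds(1)[of L2 A] by (simp add: miscoordinated_def X_eq)
  note pay = miscoordinated_payoffs[OF mis] and mis' = mis[unfolded miscoordinated_def]
  note sum = Y_sum[of A']
  show ?thesis
  proof (cases "Y (oth A') > 0")
    case False
    then show ?thesis using empty_cell(2)[OF False] assms pay mis' sum by (simp add: best_mass_pay_ex)
  next
    case True
    from cell_cases[OF XA True] show ?thesis
    proof (elim disjE)
      assume "Q A (oth A') = 0 \<and> P A (oth A') = 0"
      then show ?thesis using True assms pay mis' sum by (simp add: best_mass_pay_ex)
    next
      assume "miscoordinated A (oth A')"
      then show ?thesis using assms pay mis' sum by (simp add: miscoordinated_values)
    qed (use True in simp)
  qed
qed

lemma R_payoffs_beside_miscoordinated:
  assumes mis: "miscoordinated A A'" and "16/9 \<le> W R1" "1/9 \<le> W R2"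
  shows "(W R1 = 16/9 \<and> W R2 = 1/9) \<or>
    (X (oth A) > 0 \<and> Q (oth A) A' = 0 \<and> P (oth A) A' = 0)"
proof -
  have YA': "Y A' > 0" using mis strategy_bounds(2)[of R2 A'] by (simp add: miscoordinated_def Y_eq)
  note pay = miscoordinated_payoffs[OF mis] and mis' = mis[unfolded miscoordinated_def]
  note sum = X_sum[of A]
  show ?thesis
  proof (cases "X (oth A) > 0")
    case False
    then show ?thesis using empty_cell(1)[OF False] assms pay mis' sum by (simp add: best_mass_pay_ex)
  next
    case True
    from cell_cases[OF True YA'] show ?thesis
    proof (elim disjE)
      assume "Q (oth A) A' = Y A' \<and> P (oth A) A' = X (oth A)"
      then show ?thesis using True assms pay mis' sum by (simp add: best_mass_pay_ex)
    next
      assume "miscoordinated (oth A) A'"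
      then show ?thesis using assms pay mis' sum by (simp add: miscoordinated_values)
    qed (use True in simp)
  qed
qed

text \<open>L1 would rather send oth A and R1 rather oth A', so only L2 and R2 send these; whichever
  way the cell (oth A, oth A') coordinates, L2 or R2 then has a profitable deviation.\<close>
lemma not_coordinated_beside_miscoordinated:
  assumes mis: "miscoordinated A A'"
    and L: "Y (oth A') > 0" "Q A (oth A') = Y (oth A')" "P A (oth A') = X A"
    and R: "X (oth A) > 0" "Q (oth A) A' = 0" "P (oth A) A' = 0"
  shows False
proof -
  note pay = miscoordinated_payoffs[OF mis] and mis' = mis[unfolded miscoordinated_def]
  note bounds = mass_bounds[where n=A and n'=A']
    and other_values = value_bounds[where n="oth A" and n'="oth A'"]
  have vL: "vL L1 A (oth A') = 2 * Y (oth A')" "vL L2 A (oth A') = 2 * Y (oth A')"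
    "vL L1 (oth A) A' = Y A'" "vL L2 (oth A) A' = Y A'"
    using L R bounds by (simp_all add: best_mass_pay_ex)
  have vR: "vR R1 A (oth A') = X A" "vR R2 A (oth A') = X A"
    "vR R1 (oth A) A' = 2 * X (oth A)" "vR R2 (oth A) A' = 2 * X (oth A)"
    using L R bounds by (simp_all add: best_mass_pay_ex)
  have "\<not> x L1 (oth A) > 0"
    using L_payoff_eq[of L1 "oth A" A'] pay(1) vL other_values(1)[of L1] mis' by auto
  then have L2: "x L2 (oth A) > 0"
    using R(1) X_eq[of "oth A"] strategy_bounds(1)[of L1 "oth A"] by simp
  have "\<not> y R1 (oth A') > 0"
    using R_payoff_eq[of R1 "oth A'" A] pay(3) vR other_values(2)[of R1] mis' by auto
  then have R2: "y R2 (oth A') > 0"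
    using L(1) Y_eq[of "oth A'"] strategy_bounds(2)[of R1 "oth A'"] by simp
  from cell_cases[OF R(1) L(1)] show False
  proof (elim disjE)
    assume "Q (oth A) (oth A') = Y (oth A') \<and> P (oth A) (oth A') = X (oth A)"
    then show False using L_payoff_eq[of L2 "oth A" A', OF _ L2] pay(2) vL mis'
      by (simp add: best_mass_pay_ex)
  next
    assume "Q (oth A) (oth A') = 0 \<and> P (oth A) (oth A') = 0"
    then show False using R_payoff_eq[of R2 "oth A'" A, OF _ R2] pay(4) vR mis'
      by (simp add: best_mass_pay_ex)
  next
    assume "miscoordinated (oth A) (oth A')"
    then show False using \<open>\<not> x L1 (oth A) > 0\<close> by (simp add: miscoordinated_def)
  qed
qed

lemma payoffs_not_above_sigma:
  assumes "16/9 \<le> U L1" "1/9 \<le> U L2" "16/9 \<le> W R1" "1/9 \<le> W R2"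
  shows "U L1 = 16/9 \<and> U L2 = 1/9 \<and> W R1 = 16/9 \<and> W R2 = 1/9"
proof (cases "\<exists>A A'. miscoordinated A A'")
  case True
  then obtain A A' where mis: "miscoordinated A A'" by blast
  note mis' = mis[unfolded miscoordinated_def]
  have XA: "X A > 0" and YA': "Y A' > 0"
    using mis' X_eq[of A] Y_eq[of A'] strategy_bounds(1)[of L2 A] strategy_bounds(2)[of R2 A']
    by simp_all
  let ?L = "Y (oth A') > 0 \<and> Q A (oth A') = Y (oth A') \<and> P A (oth A') = X A"
  let ?R = "X (oth A) > 0 \<and> Q (oth A) A' = 0 \<and> P (oth A) A' = 0"
  have "?R \<Longrightarrow> Y A' + Y (oth A') / 9 \<le> U L2"
    using L_payoff_ge[where t=L2 and n="oth A" and n'=A'] value_bounds(3)[of "oth A" "oth A'"]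
      mass_bounds[where n="oth A" and n'=A'] by (simp add: best_mass_pay_ex)
  then have "?R \<Longrightarrow> U L2 \<noteq> 1/9" using YA' Y_sum[of A'] by auto
  moreover have "?L \<Longrightarrow> X A + X (oth A) / 9 \<le> W R2"
    using R_payoff_ge[where t=R2 and n=A and n'="oth A'"] value_bounds(4)[of "oth A" "oth A'"]
      mass_bounds[where n=A and n'="oth A'"] by (simp add: best_mass_pay_ex)
  then have "?L \<Longrightarrow> W R2 \<noteq> 1/9" using XA X_sum[of A] by auto
  ultimately show ?thesis
    using L_payoffs_beside_miscoordinated[OF mis assms(1,2)]
      R_payoffs_beside_miscoordinated[OF mis assms(3,4)]
      not_coordinated_beside_miscoordinated[OF mis] by blast
next
  case False
  then have "U L1 / 9 + 8 * U L2 / 9 + W R1 / 9 + 8 * W R2 / 9 = 3" "U L1 \<le> U L2" "W R1 \<le> W R2"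
    using welfare L2_payoff_ge_L1 R2_payoff_ge_R1 by blast+
  then show ?thesis using assms by linarith
qed

end

lemma CP_retrump_after_mL_mR:
  assumes trumps: "CP_trumps u_ex \<tau>1 \<tau>2 sigma_ex sigma_ex F_ex F_ex mL mR"
  shows "\<exists>\<rho>1 \<rho>2 n n'. CP_trumps u_ex \<rho>1 \<rho>2 \<tau>1 \<tau>2 postL postR n n'"
proof (rule ccontr)
  assume no_retrump: "\<not> ?thesis"
  have "is_eq u_ex postL postR \<tau>1 \<tau>2" using trumps by (simp add: CP_trumps_def post_sigma_ex)
  then interpret pooling_proof \<tau>1 \<tau>2 using no_retrump by unfold_locales blast+
  have "16/9 \<le> U L1" "1/9 \<le> U L2" "16/9 \<le> W R1" "1/9 \<le> W R2"
    and "16/9 < U L1 \<or> 1/9 < U L2 \<or> 16/9 < W R1 \<or> 1/9 < W R2"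
    using trumps by (simp_all add: CP_trumps_def post_sigma_ex all_ex_type ex_ex_type pc_pay_sigma_ex)
  then show False using payoffs_not_above_sigma by linarith
qed

lemma weakly_CP_sigma_ex: "weakly_CP u_ex F_ex sigma_ex"
  unfolding weakly_CP_def
proof (intro conjI allI impI sigma_ex_eq)
  fix \<tau>1 \<tau>2 m m'
  assume trumps: "CP_trumps u_ex \<tau>1 \<tau>2 sigma_ex sigma_ex F_ex F_ex m m'"
  show "\<exists>\<rho>1 \<rho>2 n n'. CP_trumps u_ex \<rho>1 \<rho>2 \<tau>1 \<tau>2 (post F_ex sigma_ex m) (post F_ex sigma_ex m') n n'"
  proof (cases m; cases m')
    assume "m = mL" "m' = mR"
    then show ?thesis using CP_retrump_after_mL_mR trumps by (simp add: post_sigma_ex)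
  next
    assume m: "m = mR" "m' = mL"
    then have "CP_trumps u_ex \<tau>2 \<tau>1 sigma_ex sigma_ex F_ex F_ex mL mR"
      using CP_trumps_swap[OF trumps] by simp
    then obtain \<rho>1 \<rho>2 n n' where "CP_trumps u_ex \<rho>1 \<rho>2 \<tau>2 \<tau>1 postL postR n n'"
      using CP_retrump_after_mL_mR by blast
    then have "CP_trumps u_ex \<rho>2 \<rho>1 \<tau>1 \<tau>2 postR postL n' n" by (rule CP_trumps_swap)
    then show ?thesis unfolding m post_sigma_ex by blast
  qed (use trumps no_CP_trumps_sigma_ex_coordinated in simp_all)
qed

lemma miscoord_prob_sigma_ex: "miscoord_prob F_ex F_ex sigma_ex sigma_ex mL mR > 0"
  by (simp add: miscoord_prob_def post_sigma_ex sum_ex_type, simp add: sigma_ex_def)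

theorem mainTheorem14:
  shows "is_eq u_ex F_ex F_ex sigma_ex sigma_ex \<and>
         weakly_CP u_ex F_ex sigma_ex \<and>
         \<not> strongly_CP u_ex F_ex sigma_ex \<and>
         miscoord_prob F_ex F_ex sigma_ex sigma_ex mL mR > 0"
  using sigma_ex_eq weakly_CP_sigma_ex not_strongly_CP_sigma_ex miscoord_prob_sigma_ex by blast

end
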